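(* Let $\omega_0>0$ and $\gamma>0$, and consider the control system on $SU(2)\times SU(2)$ $$\dot X_1(t)=-i\big(\omega_0 S_z+u_x(t)S_x+u_y(t)S_y+u_z(t)S_z\big)X_1(t),\qquad X_1(0)=I,$$ $$\dot X_2(t)=-i\big(-\omega_0 S_z+u_x(t)S_x+u_y(t)S_y+u_z(t)S_z\big)X_2(t),\qquad X_2(0)=I,$$ with admissible controls satisfying $u_x^2+u_y^2+u_z^2\le\gamma^2$ for all $t$. Let $X_f,\hat X_f\in SU(2)$ satisfy $\hat X_f=e^{i\varphi S_z}X_fe^{-i\varphi S_z}$ for some $\varphi\in\mathbb{R}$. Suppose an admissible control $(u_x,u_y,u_z)$ steers the system so that $X_1(t_f)=\pm X_f$ and $X_2(t_f)=\pm X_f$ (some choice of signs). Then there is an admissible control $(\hat u_x,\hat u_y,\hat u_z)$, with $\hat u_x^2+\hat u_y^2+\hat u_z^2\le\gamma^2$, that steers the system in the same time $t_f$ so that $X_1(t_f)=\pm\hat X_f$ and $X_2(t_f)=\pm\hat X_f$.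
   Context: $S_k=\frac12\sigma_k$ for $k=x,y,z$, where $\sigma_x,\sigma_y,\sigma_z$ are the Pauli matrices $\sigma_x=\begin{pmatrix}0&1\\1&0\end{pmatrix}$, $\sigma_y=\begin{pmatrix}0&-i\\i&0\end{pmatrix}$, $\sigma_z=\begin{pmatrix}1&0\\0&-1\end{pmatrix}$; $I$ is the $2\times 2$ identity. Controls are measurable real functions of time. *)

theory Defs
  imports "HOL-Analysis.Analysis"
begin

type_synonym cmat2 = "complex ^ 2 ^ 2"

definition mat2 :: "complex \<Rightarrow> complex \<Rightarrow> complex \<Rightarrow> complex \<Rightarrow> cmat2" where
  "mat2 a b c d = (\<chi> i j. if i = 1 then (if j = 1 then a else b) else (if j = 1 then c else d))"

definition cscale :: "complex \<Rightarrow> cmat2 \<Rightarrow> cmat2" where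
  "cscale c M = (\<chi> i j. c * M $ i $ j)"

definition adjoint2 :: "cmat2 \<Rightarrow> cmat2" where
  "adjoint2 M = (\<chi> i j. cnj (M $ j $ i))"

definition SU2 :: "cmat2 set" where
  "SU2 = {M. M ** adjoint2 M = mat 1 \<and> adjoint2 M ** M = mat 1 \<and> det M = 1}"

definition Sx :: cmat2 where "Sx = cscale (1/2) (mat2 0 1 1 0)"
definition Sy :: cmat2 where "Sy = cscale (1/2) (mat2 0 (-\<i>) \<i> 0)"
definition Sz :: cmat2 where "Sz = cscale (1/2) (mat2 1 0 0 (-1))"

text \<open>exp(i phi S_z), written out (S_z is diagonal).\<close>
definition expiSz :: "real \<Rightarrow> cmat2" where
  "expiSz phi = mat2 (exp (\<i> * of_real phi / 2)) 0 0 (exp (- \<i> * of_real phi / 2))"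

definition gen :: "real \<Rightarrow> real \<Rightarrow> real \<Rightarrow> real \<Rightarrow> cmat2" where
  "gen w ux uy uz = cscale (-\<i>)
     (cscale (of_real w) Sz + cscale (of_real ux) Sx + cscale (of_real uy) Sy + cscale (of_real uz) Sz)"

definition admissible :: "real \<Rightarrow> real \<Rightarrow> (real \<Rightarrow> real) \<Rightarrow> (real \<Rightarrow> real) \<Rightarrow> (real \<Rightarrow> real) \<Rightarrow> bool" where
  "admissible \<gamma> tf ux uy uz \<longleftrightarrow>
     ux \<in> borel_measurable lborel \<and> uy \<in> borel_measurable lborel \<and> uz \<in> borel_measurable lborel \<and>
     (\<forall>t\<in>{0..tf}. (ux t)\<^sup>2 + (uy t)\<^sup>2 + (uz t)\<^sup>2 \<le> \<gamma>\<^sup>2)"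

text \<open>X is a (Caratheodory) solution on [0,tf] of dX/dt = gen w (u(t)) X, X(0) = I,
  i.e. X(t) = I + integral_0^t gen(s) X(s) ds.\<close>
definition solves :: "real \<Rightarrow> (real \<Rightarrow> real) \<Rightarrow> (real \<Rightarrow> real) \<Rightarrow> (real \<Rightarrow> real) \<Rightarrow> real \<Rightarrow> (real \<Rightarrow> cmat2) \<Rightarrow> bool" where
  "solves w ux uy uz tf X \<longleftrightarrow>
     X 0 = mat 1 \<and>
     (\<forall>t\<in>{0..tf}. ((\<lambda>s. gen w (ux s) (uy s) (uz s) ** X s) has_integral (X t - mat 1)) {0..t})"

definition steers :: "real \<Rightarrow> (real \<Rightarrow> real) \<Rightarrow> (real \<Rightarrow> real) \<Rightarrow> (real \<Rightarrow> real) \<Rightarrow> real \<Rightarrow> cmat2 \<Rightarrow> bool" where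
  "steers w0 ux uy uz tf Y \<longleftrightarrow>
     (\<exists>X1 X2. solves w0 ux uy uz tf X1 \<and> solves (-w0) ux uy uz tf X2 \<and>
        (X1 tf = Y \<or> X1 tf = - Y) \<and> (X2 tf = Y \<or> X2 tf = - Y))"

end

theory Submission
  imports Defs
begin

text \<open>Conjugation by the rotation exp(i phi S_z) commutes with the drift term w0 S_z of
  both systems, rotates the transverse control (u_x, u_y) by the angle phi and fixes u_z, so
  it preserves the control bound. Conjugating both trajectories of the given control by this
  rotation therefore yields the trajectories of the rotated control, and their endpoints
  are the conjugates of +-X_f, i.e. +-X_f'.\<close>

lemma bounded_linear_matrix_sandwich:
  fixes A :: "complex ^ 'n ^ 'm" and B :: "complex ^ 'q ^ 'p"
  shows "bounded_linear (\<lambda>M. A ** M ** B)"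
proof -
  have "linear (\<lambda>M. A ** M ** B)"
    by (rule linearI) (auto simp: vec_eq_iff matrix_matrix_mult_def sum.distrib sum_distrib_left
        sum_distrib_right algebra_simps scaleR_sum_right)
  then show ?thesis
    by (simp add: linear_conv_bounded_linear)
qed

lemma matrix_sandwich_diff: "A ** (M - N) ** B = A ** M ** B - A ** N ** B"
  for A M N B :: "complex ^ 'n ^ 'n"
  using linear_diff[OF bounded_linear.linear[OF bounded_linear_matrix_sandwich]] .

lemma matrix_sandwich_uminus: "A ** (- M) ** B = - (A ** M ** B)"
  for A M B :: "complex ^ 'n ^ 'n"
  using linear_neg[OF bounded_linear.linear[OF bounded_linear_matrix_sandwich]] .

lemma solves_conj:
  assumes X: "solves w ux uy uz tf X"
    and inverse: "R ** R' = mat 1" "R' ** R = mat 1"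
    and gen_conj: "\<And>s. R ** gen w (ux s) (uy s) (uz s) ** R' = gen w (vx s) (vy s) (vz s)"
  shows "solves w vx vy vz tf (\<lambda>t. R ** X t ** R')"
  unfolding solves_def
proof safe
  show "R ** X 0 ** R' = mat 1"
    using X inverse by (simp add: solves_def)
  fix t assume t: "t \<in> {0..tf}"
  have "((\<lambda>s. gen w (ux s) (uy s) (uz s) ** X s) has_integral (X t - mat 1)) {0..t}"
    using X t by (simp add: solves_def)
  then have "((\<lambda>s. R ** (gen w (ux s) (uy s) (uz s) ** X s) ** R') has_integral
              (R ** (X t - mat 1) ** R')) {0..t}"
    by (rule has_integral_linear[OF _ bounded_linear_matrix_sandwich, unfolded o_def])
  moreover have "R ** (gen w (ux s) (uy s) (uz s) ** X s) ** R' =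
                 gen w (vx s) (vy s) (vz s) ** (R ** X s ** R')" for s
  proof -
    have "R ** (gen w (ux s) (uy s) (uz s) ** X s) ** R'
          = R ** gen w (ux s) (uy s) (uz s) ** (R' ** R) ** X s ** R'"
      by (simp add: inverse matrix_mul_assoc)
    also have "\<dots> = gen w (vx s) (vy s) (vz s) ** (R ** X s ** R')"
      by (simp add: gen_conj[symmetric] matrix_mul_assoc)
    finally show ?thesis .
  qed
  ultimately show "((\<lambda>s. gen w (vx s) (vy s) (vz s) ** (R ** X s ** R')) has_integral
                    (R ** X t ** R' - mat 1)) {0..t}"
    by (simp add: matrix_sandwich_diff inverse)
qed

lemma diag_conj_gen:
  fixes c s :: real
  assumes ab: "a * b = 1"
    and aa: "a * a = of_real c + \<i> * of_real s" and bb: "b * b = of_real c - \<i> * of_real s"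
  shows "mat2 a 0 0 b ** gen w ux uy uz ** mat2 b 0 0 a =
         gen w (c * ux + s * uy) (c * uy - s * ux) uz"
proof -
  have ba: "b * a = 1"
    using ab by (simp add: mult.commute)
  show ?thesis
    apply (simp add: vec_eq_iff matrix_matrix_mult_def mat2_def gen_def cscale_def
        Sx_def Sy_def Sz_def forall_2 UNIV_2)
    apply (simp add: algebra_simps)
    apply (simp add: mult.assoc[symmetric] ab ba aa bb)
    apply (simp add: mult.assoc ab ba aa bb)
    apply (simp add: field_simps)
    done
qed

lemma expiSz_eq_mat2:
  "expiSz p = mat2 (exp (\<i> * of_real p / 2)) 0 0 (exp (- (\<i> * of_real p / 2)))"
  "expiSz (- p) = mat2 (exp (- (\<i> * of_real p / 2))) 0 0 (exp (\<i> * of_real p / 2))"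
  by (simp_all add: expiSz_def)

lemma exp_half_angle:
  "exp (\<i> * of_real p / 2) * exp (- (\<i> * of_real p / 2)) = 1"
  "exp (\<i> * of_real p / 2) * exp (\<i> * of_real p / 2) = of_real (cos p) + \<i> * of_real (sin p)"
  "exp (- (\<i> * of_real p / 2)) * exp (- (\<i> * of_real p / 2)) = of_real (cos p) - \<i> * of_real (sin p)"
proof -
  have "exp (\<i> * of_real p / 2) * exp (\<i> * of_real p / 2) = exp (\<i> * of_real p)"
    "exp (- (\<i> * of_real p / 2)) * exp (- (\<i> * of_real p / 2)) = exp (- (\<i> * of_real p))"
    by (simp_all add: exp_add[symmetric])
  then show "exp (\<i> * of_real p / 2) * exp (\<i> * of_real p / 2) = of_real (cos p) + \<i> * of_real (sin p)"
    "exp (- (\<i> * of_real p / 2)) * exp (- (\<i> * of_real p / 2)) = of_real (cos p) - \<i> * of_real (sin p)"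
    by (simp_all add: Euler complex_eq_iff)
  show "exp (\<i> * of_real p / 2) * exp (- (\<i> * of_real p / 2)) = 1"
    by (simp add: exp_add[symmetric])
qed

lemma expiSz_inverse:
  "expiSz p ** expiSz (- p) = mat 1" "expiSz (- p) ** expiSz p = mat 1"
  by (auto simp: expiSz_eq_mat2 vec_eq_iff matrix_matrix_mult_def mat2_def mat_def forall_2 UNIV_2
      exp_half_angle(1) mult.commute)

lemma expiSz_conj_gen:
  "expiSz p ** gen w ux uy uz ** expiSz (- p) =
   gen w (cos p * ux + sin p * uy) (cos p * uy - sin p * ux) uz"
  unfolding expiSz_eq_mat2(2) unfolding expiSz_eq_mat2(1) by (rule diag_conj_gen) (use exp_half_angle in auto)

lemma admissible_rotate:
  assumes "admissible \<gamma> tf ux uy uz"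
  shows "admissible \<gamma> tf (\<lambda>s. cos p * ux s + sin p * uy s) (\<lambda>s. cos p * uy s - sin p * ux s) uz"
proof -
  have "(cos p * ux t + sin p * uy t)\<^sup>2 + (cos p * uy t - sin p * ux t)\<^sup>2 = (ux t)\<^sup>2 + (uy t)\<^sup>2" for t
    using sin_cos_squared_add[of p] by algebra
  then show ?thesis
    using assms by (auto simp: admissible_def)
qed

lemma steers_conj_expiSz:
  assumes "steers w0 ux uy uz tf Y"
  shows "steers w0 (\<lambda>s. cos p * ux s + sin p * uy s) (\<lambda>s. cos p * uy s - sin p * ux s) uz tf
           (expiSz p ** Y ** expiSz (- p))"
proof -
  obtain X1 X2 where "solves w0 ux uy uz tf X1" "solves (- w0) ux uy uz tf X2"
    and "X1 tf = Y \<or> X1 tf = - Y" "X2 tf = Y \<or> X2 tf = - Y"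
    using assms by (auto simp: steers_def)
  then show ?thesis
    unfolding steers_def
    by (intro exI[of _ "\<lambda>t. expiSz p ** X1 t ** expiSz (- p)"]
        exI[of _ "\<lambda>t. expiSz p ** X2 t ** expiSz (- p)"])
      (auto intro!: solves_conj expiSz_inverse expiSz_conj_gen simp: matrix_sandwich_uminus)
qed

theorem proposition1:
  fixes \<omega>0 \<gamma> tf \<phi> :: real and Xf Xfh :: cmat2 and ux uy uz :: "real \<Rightarrow> real"
  assumes "\<omega>0 > 0" and "\<gamma> > 0"
    and "Xf \<in> SU2" and "Xfh \<in> SU2"
    and "Xfh = expiSz \<phi> ** Xf ** expiSz (- \<phi>)"
    and "admissible \<gamma> tf ux uy uz"
    and "steers \<omega>0 ux uy uz tf Xf"
  shows "\<exists>vx vy vz. admissible \<gamma> tf vx vy vz \<and> steers \<omega>0 vx vy vz tf Xfh"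
  using admissible_rotate[OF assms(6)] steers_conj_expiSz[OF assms(7)] assms(5) by blast

end
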